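(* Let $(\mathcal{X},\mathfrak{X})$, $(\mathcal{Y},\mathfrak{Y})$ be measurable spaces, let $\mu,\nu$ be finite measures on $(\mathcal{X}\times\mathcal{Y},\mathfrak{X}\times\mathfrak{Y})$, and let $\xi$ be a finite measure with $\xi\ll\mu+\nu$. Then for every $\epsilon>0$ there exist a finite sub-$\sigma$-algebra $\mathfrak{C}$ of $\mathfrak{X}$ and a finite sub-$\sigma$-algebra $\mathfrak{D}$ of $\mathfrak{Y}$ such that \[ \xi\bigl\{d_{\mathbb{H}}\bigl([\mathrm{d}\mu|_{\mathfrak{F}}:\mathrm{d}\nu|_{\mathfrak{F}}],[\mathrm{d}\mu:\mathrm{d}\nu]\bigr)\ge\epsilon\bigr\}<\epsilon \] for every $\sigma$-algebra $\mathfrak{F}$ with $\mathfrak{C}\times\mathfrak{D}\subseteq\mathfrak{F}\subseteq\mathfrak{X}\times\mathfrak{Y}$.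
   Context: The half projective line $\mathbb{H}$ is the set of rays $[r:s]=\{t(r,s):t>0\}$ for $(r,s)\in[0,\infty)^2\setminus\{(0,0)\}$, with metric $d_{\mathbb{H}}([r_1:s_1],[r_2:s_2])=|r_1/(r_1+s_1)-r_2/(r_2+s_2)|$. For finite measures $\alpha,\beta$ on a measurable space, the likelihood ratio is the $\mathbb{H}$-valued function $[\mathrm{d}\alpha:\mathrm{d}\beta]:=[\mathrm{d}\alpha/\mathrm{d}(\alpha+\beta):\mathrm{d}\beta/\mathrm{d}(\alpha+\beta)]$, defined $(\alpha+\beta)$-a.e. For a sub-$\sigma$-algebra $\mathfrak{F}$, $\mu|_{\mathfrak{F}}$ denotes the restriction of $\mu$ to $\mathfrak{F}$, so $[\mathrm{d}\mu|_{\mathfrak{F}}:\mathrm{d}\nu|_{\mathfrak{F}}]$ is the likelihood ratio of the restricted measures (an $\mathfrak{F}$-measurable function on $\mathcal{X}\times\mathcal{Y}$). *)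

theory Defs
  imports "HOL-Probability.Probability"
begin

definition add_measure :: "'a measure \<Rightarrow> 'a measure \<Rightarrow> 'a measure" where
  "add_measure M N = measure_of (space M) (sets M) (\<lambda>A. emeasure M A + emeasure N A)"

definition restr_measure :: "'a measure \<Rightarrow> 'a set set \<Rightarrow> 'a measure" where
  "restr_measure M F = measure_of (space M) F (emeasure M)"

text \<open>A point of the half projective line, represented by a pair (r,s) with r,s \<ge> 0,
  (r,s) \<noteq> (0,0); the metric d_H.\<close>
definition dH :: "real \<times> real \<Rightarrow> real \<times> real \<Rightarrow> real" where
  "dH p q = \<bar>fst p / (fst p + snd p) - fst q / (fst q + snd q)\<bar>"

text \<open>Likelihood ratio [d\<alpha> : d\<beta>] = [d\<alpha>/d(\<alpha>+\<beta>) : d\<beta>/d(\<alpha>+\<beta>)], a version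
  defined everywhere (determined (\<alpha>+\<beta>)-a.e.).\<close>
definition likelihood_ratio :: "'a measure \<Rightarrow> 'a measure \<Rightarrow> 'a \<Rightarrow> real \<times> real" where
  "likelihood_ratio \<alpha> \<beta> = (\<lambda>x. (enn2real (RN_deriv (add_measure \<alpha> \<beta>) \<alpha> x),
                                 enn2real (RN_deriv (add_measure \<alpha> \<beta>) \<beta> x)))"

definition prod_sigma :: "'a set \<Rightarrow> 'a set set \<Rightarrow> 'b set \<Rightarrow> 'b set set \<Rightarrow> ('a \<times> 'b) set set" where
  "prod_sigma X C Y D = sigma_sets (X \<times> Y) {a \<times> b | a b. a \<in> C \<and> b \<in> D}"

end

theory Submission
  imports Defs
begin

(* Put \<lambda> = \<mu> + \<nu> and f = d\<mu>/d\<lambda>. Then [d\<mu> : d\<nu>] = [f : 1 - f] \<lambda>-a.e., and likewise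
  [d\<mu>|F : d\<nu>|F] = [h : 1 - h], where h = d\<mu>|F / d\<lambda>|F is the conditional expectation of f
  given F; so the d_H-deviation is |h - f|. Measurable sets of the product, and hence integrable
  functions, can be approximated in \<lambda>-measure, resp. in L1(\<lambda>), by sets, resp. functions, that
  are measurable for C \<times> D with finite sub-\<sigma>-algebras C and D. If g is such an approximation
  of f within \<eta>, then for every F \<supseteq> C \<times> D the L1-contraction property of conditional
  expectation gives |h - f|_1 \<le> |h - g|_1 + |g - f|_1 \<le> 2\<eta>; Markov's inequality bounds
  \<lambda>{|h - f| \<ge> \<epsilon>} by 2\<eta>/\<epsilon>, and the \<epsilon>-\<delta> form of the absolute continuity of \<xi>
  with respect to \<lambda> transfers this bound to \<xi>. *)

lemma sets_add_measure [simp]: "sets (add_measure M N) = sets M"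
  unfolding add_measure_def by simp

lemma space_add_measure [simp]: "space (add_measure M N) = space M"
  unfolding add_measure_def by simp

lemma emeasure_add_measure:
  assumes "sets M = sets N" and "A \<in> sets M"
  shows "emeasure (add_measure M N) A = emeasure M A + emeasure N A"
proof -
  have ca: "countably_additive (sets M) (\<lambda>A. emeasure M A + emeasure N A)"
  proof (rule countably_additiveI)
    fix F :: "nat \<Rightarrow> _"
    assume "range F \<subseteq> sets M" "disjoint_family F" "\<Union> (range F) \<in> sets M"
    then show "(\<Sum>i. emeasure M (F i) + emeasure N (F i)) =
        emeasure M (\<Union> (range F)) + emeasure N (\<Union> (range F))"
      using assms(1) by (simp add: suminf_add[symmetric] suminf_emeasure)
  qed
  show ?thesis
    unfolding add_measure_def
    by (rule emeasure_measure_of_sigma[OF sets.sigma_algebra_axioms _ ca assms(2)])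
      (simp add: positive_def)
qed

lemma finite_measure_add_measure:
  assumes "sets M = sets N" and "finite_measure M" and "finite_measure N"
  shows "finite_measure (add_measure M N)"
proof (rule finite_measureI)
  have "emeasure (add_measure M N) (space M) = emeasure M (space M) + emeasure N (space N)"
    using emeasure_add_measure[OF assms(1) sets.top] sets_eq_imp_space_eq[OF assms(1)] by simp
  then show "emeasure (add_measure M N) (space (add_measure M N)) \<noteq> \<infinity>"
    using assms(2,3) by (simp add: finite_measure.emeasure_finite)
qed

lemma absolutely_continuous_add_measure:
  assumes "sets M = sets N"
  shows "absolutely_continuous (add_measure M N) M" and "absolutely_continuous (add_measure M N) N"
  using assms by (auto simp: absolutely_continuous_def null_sets_def emeasure_add_measure)

lemma AE_likelihood_ratio_sum_eq_1:
  assumes MN: "sets M = sets N" and "finite_measure M" and "finite_measure N"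
  shows "AE x in add_measure M N. fst (likelihood_ratio M N x) + snd (likelihood_ratio M N x) = 1"
proof -
  let ?L = "add_measure M N"
  interpret L: finite_measure ?L
    using finite_measure_add_measure[OF assms] .
  have dM: "density ?L (RN_deriv ?L M) = M"
    using absolutely_continuous_add_measure(1)[OF MN] by (intro L.density_RN_deriv) auto
  have dN: "density ?L (RN_deriv ?L N) = N"
    using absolutely_continuous_add_measure(2)[OF MN] MN by (intro L.density_RN_deriv) auto
  have "density ?L (\<lambda>x. RN_deriv ?L M x + RN_deriv ?L N x) = density ?L (\<lambda>_. 1)"
  proof (rule measure_eqI)
    fix A assume "A \<in> sets (density ?L (\<lambda>x. RN_deriv ?L M x + RN_deriv ?L N x))"
    then have A[measurable]: "A \<in> sets ?L" by simp
    have "emeasure (density ?L (\<lambda>x. RN_deriv ?L M x + RN_deriv ?L N x)) A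
        = (\<integral>\<^sup>+x\<in>A. RN_deriv ?L M x + RN_deriv ?L N x \<partial>?L)"
      using A by (simp add: emeasure_density)
    also have "\<dots> = (\<integral>\<^sup>+x\<in>A. RN_deriv ?L M x \<partial>?L) + (\<integral>\<^sup>+x\<in>A. RN_deriv ?L N x \<partial>?L)"
      by (subst nn_integral_add[symmetric]) (auto simp: distrib_right intro!: nn_integral_cong)
    also have "\<dots> = emeasure M A + emeasure N A"
      using A by (simp add: emeasure_density[symmetric] dM dN)
    also have "\<dots> = emeasure (density ?L (\<lambda>_. 1)) A"
      using A MN by (simp add: emeasure_density emeasure_add_measure)
    finally show "emeasure (density ?L (\<lambda>x. RN_deriv ?L M x + RN_deriv ?L N x)) A
        = emeasure (density ?L (\<lambda>_. 1)) A" .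
  qed simp
  then have "AE x in ?L. RN_deriv ?L M x + RN_deriv ?L N x = 1"
    by (subst (asm) L.density_unique_iff) auto
  then show ?thesis
  proof (rule AE_mp[OF _ AE_I2], intro impI)
    fix x assume sum: "RN_deriv ?L M x + RN_deriv ?L N x = 1"
    then have "RN_deriv ?L M x \<noteq> \<top>" "RN_deriv ?L N x \<noteq> \<top>"
      by (auto simp: top_add add_top)
    then show "fst (likelihood_ratio M N x) + snd (likelihood_ratio M N x) = 1"
      using sum enn2real_plus[of "RN_deriv ?L M x" "RN_deriv ?L N x"]
      by (simp add: likelihood_ratio_def top.not_eq_extremum)
  qed
qed

lemma dH_eq_abs_diff_fst:
  "fst p + snd p = 1 \<Longrightarrow> fst q + snd q = 1 \<Longrightarrow> dH p q = \<bar>fst p - fst q\<bar>"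
  by (simp add: dH_def)

lemma borel_measurable_likelihood_ratio:
  "(\<lambda>x. fst (likelihood_ratio M N x)) \<in> borel_measurable M"
  "(\<lambda>x. snd (likelihood_ratio M N x)) \<in> borel_measurable M"
proof -
  have "measurable (add_measure M N) borel = measurable M borel"
    by (rule measurable_cong_sets) simp_all
  then show "(\<lambda>x. fst (likelihood_ratio M N x)) \<in> borel_measurable M"
    "(\<lambda>x. snd (likelihood_ratio M N x)) \<in> borel_measurable M"
    unfolding likelihood_ratio_def by (simp_all flip: \<open>measurable (add_measure M N) borel = measurable M borel\<close>)
qed

lemma space_restr_measure [simp]: "space (restr_measure M F) = space M"
  unfolding restr_measure_def by (simp add: space_measure_of_conv)

lemma sets_restr_measure: "sigma_algebra (space M) F \<Longrightarrow> sets (restr_measure M F) = F"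
  unfolding restr_measure_def by (rule sigma_algebra.sets_measure_of_eq)

lemma restr_measure_eq_restr_to_subalg:
  assumes "sigma_algebra (space M) F" and "F \<subseteq> sets M"
  shows "subalgebra M (restr_measure M F)"
    and "restr_measure M F = restr_to_subalg M (restr_measure M F)"
proof -
  have sets_F: "sets (restr_measure M F) = F"
    by (rule sets_restr_measure[OF assms(1)])
  then show "subalgebra M (restr_measure M F)"
    using assms(2) by (simp add: subalgebra_def)
  show "restr_measure M F = restr_to_subalg M (restr_measure M F)"
    unfolding restr_to_subalg_def sets_F by (simp add: restr_measure_def)
qed

lemma emeasure_restr_measure:
  assumes "sigma_algebra (space M) F" and "F \<subseteq> sets M" and "A \<in> F"
  shows "emeasure (restr_measure M F) A = emeasure M A"
  using restr_measure_eq_restr_to_subalg[OF assms(1,2)] emeasure_restr_to_subalg assms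
  by (metis sets_restr_measure)

lemma finite_measure_restr_measure:
  assumes "sigma_algebra (space M) F" and "F \<subseteq> sets M" and "finite_measure M"
  shows "finite_measure (restr_measure M F)"
  using restr_measure_eq_restr_to_subalg[OF assms(1,2)] finite_measure_restr_to_subalg assms(3)
  by metis

lemma AE_restr_measure:
  assumes "sigma_algebra (space M) F" and "F \<subseteq> sets M" and "AE x in restr_measure M F. P x"
  shows "AE x in M. P x"
  using restr_measure_eq_restr_to_subalg[OF assms(1,2)] AE_restr_to_subalg assms(3)
  by metis

lemma add_measure_restr_measure:
  assumes MN: "sets M = sets N" and F: "sigma_algebra (space M) F" "F \<subseteq> sets M"
  shows "add_measure (restr_measure M F) (restr_measure N F) = restr_measure (add_measure M N) F"
proof (rule measure_eqI)
  have "space N = space M"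
    using sets_eq_imp_space_eq[OF MN] by simp
  then have FN: "sigma_algebra (space N) F" "F \<subseteq> sets N"
    using F MN by simp_all
  have FL: "sigma_algebra (space (add_measure M N)) F" "F \<subseteq> sets (add_measure M N)"
    using F by simp_all
  show "sets (add_measure (restr_measure M F) (restr_measure N F)) = sets (restr_measure (add_measure M N) F)"
    using F FL by (simp add: sets_restr_measure)
  fix A assume "A \<in> sets (add_measure (restr_measure M F) (restr_measure N F))"
  then have A: "A \<in> F"
    using F by (simp add: sets_restr_measure)
  then show "emeasure (add_measure (restr_measure M F) (restr_measure N F)) A
      = emeasure (restr_measure (add_measure M N) F) A"
    using F FN FL MN
    by (simp add: emeasure_add_measure sets_restr_measure emeasure_restr_measure subsetD)
qed

lemma RN_deriv_real_set_integral:
  assumes L: "finite_measure L" and "finite_measure M"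
    and sets_eq: "sets M = sets L" and ac: "absolutely_continuous L M"
  shows "integrable L (\<lambda>x. enn2real (RN_deriv L M x))"
    and "A \<in> sets L \<Longrightarrow> (\<integral>x. enn2real (RN_deriv L M x) * indicator A x \<partial>L) = measure M A"
proof -
  interpret L: finite_measure L by fact
  interpret M: finite_measure M by fact
  have M: "sigma_finite_measure M" by unfold_locales
  show "integrable L (\<lambda>x. enn2real (RN_deriv L M x))"
    using L.RN_deriv_integrable[OF M ac sets_eq, of "\<lambda>_. 1"] by simp
  assume "A \<in> sets L"
  then show "(\<integral>x. enn2real (RN_deriv L M x) * indicator A x \<partial>L) = measure M A"
    using L.RN_deriv_integral[OF M ac sets_eq, of "indicator A"] sets_eq by simp
qed

lemma RN_deriv_restr_measure_set_integral:
  assumes L: "finite_measure L" and M: "finite_measure M"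
    and sets_eq: "sets M = sets L" and ac: "absolutely_continuous L M"
    and F: "sigma_algebra (space L) F" "F \<subseteq> sets L"
  defines "h \<equiv> \<lambda>x. enn2real (RN_deriv (restr_measure L F) (restr_measure M F) x)"
  shows "integrable L h"
    and "A \<in> F \<Longrightarrow> (\<integral>x. h x * indicator A x \<partial>L) = measure M A"
proof -
  have FM: "sigma_algebra (space M) F" "F \<subseteq> sets M"
    using F sets_eq sets_eq_imp_space_eq[OF sets_eq] by simp_all
  let ?LF = "restr_measure L F" and ?MF = "restr_measure M F"
  have sets_LF: "sets ?LF = F" and sets_MF: "sets ?MF = F"
    using F FM by (simp_all add: sets_restr_measure)
  have LF: "finite_measure ?LF" and MF: "finite_measure ?MF"
    using finite_measure_restr_measure F FM L M by auto
  have ac_F: "absolutely_continuous ?LF ?MF"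
    using ac F FM unfolding absolutely_continuous_def
    by (auto simp: null_sets_def sets_LF sets_MF emeasure_restr_measure)
  have emeasure_LF: "emeasure ?LF A = emeasure L A" if "A \<in> sets ?LF" for A
    using that F by (simp add: sets_LF emeasure_restr_measure)
  note RN = RN_deriv_real_set_integral[OF LF MF _ ac_F, unfolded sets_LF sets_MF, simplified]
  have h: "h \<in> borel_measurable ?LF"
    unfolding h_def by simp
  show "integrable L h"
    using RN(1) integrable_subalgebra[OF h _ _ emeasure_LF] F sets_LF by (simp add: h_def)
  assume A: "A \<in> F"
  have "(\<integral>x. h x * indicator A x \<partial>L) = (\<integral>x. h x * indicator A x \<partial>?LF)"
    using A F sets_LF emeasure_LF
    by (intro integral_subalgebra[symmetric]) (auto intro!: borel_measurable_times h borel_measurable_indicator)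
  also have "\<dots> = measure ?MF A"
    using RN(2)[OF A] by (simp add: h_def)
  also have "\<dots> = measure M A"
    using A FM by (simp add: measure_def emeasure_restr_measure)
  finally show "(\<integral>x. h x * indicator A x \<partial>L) = measure M A" .
qed

lemma integral_abs_diff_triangle:
  fixes f g h :: "'a \<Rightarrow> real"
  assumes "integrable M f" and "integrable M g" and "integrable M h"
  shows "(\<integral>x. \<bar>f x - h x\<bar> \<partial>M) \<le> (\<integral>x. \<bar>f x - g x\<bar> \<partial>M) + (\<integral>x. \<bar>g x - h x\<bar> \<partial>M)"
proof -
  have "(\<integral>x. \<bar>f x - h x\<bar> \<partial>M) \<le> (\<integral>x. \<bar>f x - g x\<bar> + \<bar>g x - h x\<bar> \<partial>M)"
    using assms by (intro Bochner_Integration.integral_mono) auto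
  also have "\<dots> = (\<integral>x. \<bar>f x - g x\<bar> \<partial>M) + (\<integral>x. \<bar>g x - h x\<bar> \<partial>M)"
    using assms by (intro Bochner_Integration.integral_add) auto
  finally show ?thesis .
qed

lemma integral_abs_diff_cond_exp_le:
  fixes h f g :: "'a \<Rightarrow> real"
  assumes sub: "sets N \<subseteq> sets M" "space N = space M"
    and h: "h \<in> borel_measurable N" "integrable M h"
    and g: "g \<in> borel_measurable N" "integrable M g"
    and f: "integrable M f"
    and cond_exp: "\<And>A. A \<in> sets N \<Longrightarrow> (\<integral>x. h x * indicator A x \<partial>M) = (\<integral>x. f x * indicator A x \<partial>M)"
  shows "(\<integral>x. \<bar>h x - g x\<bar> \<partial>M) \<le> (\<integral>x. \<bar>f x - g x\<bar> \<partial>M)"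
proof -
  define A where "A = {x\<in>space M. g x \<le> h x}"
  define B where "B = space M - A"
  have "{x\<in>space N. g x \<le> h x} \<in> sets N"
    using h g by measurable
  then have AN: "A \<in> sets N" and BN: "B \<in> sets N"
    using sub(2) sets.compl_sets[of A N] by (simp_all add: A_def B_def)
  then have AM: "A \<in> sets M" and BM: "B \<in> sets M"
    using sub(1) by auto
  have int: "integrable M (\<lambda>x. (u x - g x) * indicator C x)" if "integrable M u" "C \<in> sets M" for u C
    using that g by (intro integrable_real_mult_indicator) auto
  have diff_eq: "(\<integral>x. (h x - g x) * indicator C x \<partial>M) = (\<integral>x. (f x - g x) * indicator C x \<partial>M)"
    if C: "C \<in> sets N" for C
  proof -
    have CM: "C \<in> sets M"
      using C sub by auto
    have "(\<integral>x. (h x - g x) * indicator C x \<partial>M) = (\<integral>x. h x * indicator C x \<partial>M) - (\<integral>x. g x * indicator C x \<partial>M)"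
      using h g CM by (simp add: left_diff_distrib integrable_real_mult_indicator)
    also have "\<dots> = (\<integral>x. (f x - g x) * indicator C x \<partial>M)"
      using f g CM by (simp add: cond_exp[OF C] left_diff_distrib integrable_real_mult_indicator)
    finally show ?thesis .
  qed
  have "(\<integral>x. \<bar>h x - g x\<bar> \<partial>M) = (\<integral>x. (h x - g x) * indicator A x - (h x - g x) * indicator B x \<partial>M)"
    by (rule Bochner_Integration.integral_cong[OF refl]) (auto simp: A_def B_def indicator_def)
  also have "\<dots> = (\<integral>x. (f x - g x) * indicator A x - (f x - g x) * indicator B x \<partial>M)"
    using int h f AM BM by (simp add: diff_eq[OF AN] diff_eq[OF BN])
  also have "\<dots> \<le> (\<integral>x. \<bar>f x - g x\<bar> \<partial>M)"
    using int f g AM BM by (intro Bochner_Integration.integral_mono) (auto simp: indicator_def)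
  finally show ?thesis .
qed

lemma integrable_min_const:
  fixes w :: "'a \<Rightarrow> real"
  assumes "integrable M w" and "\<And>x. 0 \<le> w x" and "0 \<le> c"
  shows "integrable M (\<lambda>x. min (w x) c)"
  using assms by (intro Bochner_Integration.integrable_bound[OF assms(1)]) auto

lemma integral_truncation_tendsto_0:
  fixes w :: "'a \<Rightarrow> real"
  assumes w: "integrable M w" and w0: "\<And>x. 0 \<le> w x"
  shows "(\<lambda>n. \<integral>x. w x - min (w x) (real n) \<partial>M) \<longlonglongrightarrow> 0"
proof -
  have "(\<lambda>n. \<integral>x. w x - min (w x) (real n) \<partial>M) \<longlonglongrightarrow> (\<integral>x. 0 \<partial>M)"
  proof (rule integral_dominated_convergence[where w=w])
    show "AE x in M. (\<lambda>n. w x - min (w x) (real n)) \<longlonglongrightarrow> 0"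
    proof (rule AE_I2)
      fix x
      obtain n0 :: nat where "w x \<le> real n0"
        using real_arch_simple by blast
      then have "\<forall>n\<ge>n0. w x - min (w x) (real n) = 0"
        by (auto simp: min_def)
      then show "(\<lambda>n. w x - min (w x) (real n)) \<longlonglongrightarrow> 0"
        by (intro tendsto_eventually) (auto simp: eventually_sequentially)
    qed
    show "AE x in M. norm (w x - min (w x) (real n)) \<le> w x" for n
      using w0 by (auto simp: min_def)
  qed (use w in auto)
  then show ?thesis
    by simp
qed

lemma absolutely_continuous_epsilon_delta:
  assumes L: "finite_measure L" and M: "finite_measure M" and sets_eq: "sets M = sets L"
    and ac: "absolutely_continuous L M" and e: "e > 0"
  obtains d where "d > 0" and "\<And>A. A \<in> sets L \<Longrightarrow> measure L A < d \<Longrightarrow> measure M A < e"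
proof -
  interpret L: finite_measure L by fact
  define w where "w x = enn2real (RN_deriv L M x)" for x
  note RN = RN_deriv_real_set_integral[OF L M sets_eq ac, folded w_def]
  have w0: "0 \<le> w x" for x
    by (simp add: w_def)
  have "\<forall>\<^sub>F n in sequentially. (\<integral>x. w x - min (w x) (real n) \<partial>L) < e / 2"
    using integral_truncation_tendsto_0[OF RN(1) w0] e by (intro order_tendstoD(2)) auto
  then obtain n where n: "(\<integral>x. w x - min (w x) (real n) \<partial>L) < e / 2"
    unfolding eventually_sequentially by blast
  have tail_int: "integrable L (\<lambda>x. w x - min (w x) (real n))"
    using RN(1) integrable_min_const[OF RN(1) w0, of "real n"] by simp
  \<comment> \<open>On \<open>A\<close> the density is at most \<open>n\<close> plus the tail, so \<open>M A \<le> n * L A + e / 2\<close>.\<close>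
  show ?thesis
  proof (rule that)
    show "e / (2 * (real n + 1)) > 0"
      using e by simp
    fix A assume A: "A \<in> sets L" and small: "measure L A < e / (2 * (real n + 1))"
    have "measure M A = (\<integral>x. w x * indicator A x \<partial>L)"
      using RN(2)[OF A] by simp
    also have "\<dots> \<le> (\<integral>x. real n * indicator A x + (w x - min (w x) (real n)) \<partial>L)"
      using A RN(1) tail_int
      by (intro Bochner_Integration.integral_mono integrable_real_mult_indicator
          Bochner_Integration.integrable_add L.integrable_const)
        (auto simp: indicator_def)
    also have "\<dots> = real n * measure L A + (\<integral>x. w x - min (w x) (real n) \<partial>L)"
      using A tail_int integrable_real_mult_indicator[OF A L.integrable_const[of 1]]
      by (subst Bochner_Integration.integral_add) auto
    also have "\<dots> < e"
    proof -
      have "real n * measure L A \<le> real n * (e / (2 * (real n + 1)))"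
        using small by (intro mult_left_mono) auto
      also have "\<dots> \<le> e / 2"
        using e by (simp add: field_simps)
      finally show ?thesis
        using n by simp
    qed
    finally show "measure M A < e" .
  qed
qed

lemma restr_measure_sets:
  assumes "sets N = sets M"
  shows "restr_measure N (sets M) = N"
  using assms sets_eq_imp_space_eq[OF assms] measure_of_of_measure[of N]
  unfolding restr_measure_def by simp

lemma fst_likelihood_ratio_restr_measure:
  assumes MN: "sets M = sets N" and fin: "finite_measure M" "finite_measure N"
    and F: "sigma_algebra (space M) F" "F \<subseteq> sets M"
  defines "h \<equiv> \<lambda>z. fst (likelihood_ratio (restr_measure M F) (restr_measure N F) z)"
  shows "integrable (add_measure M N) h"
    and "A \<in> F \<Longrightarrow> (\<integral>z. h z * indicator A z \<partial>add_measure M N) = measure M A"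
proof -
  let ?L = "add_measure M N"
  let ?LF = "restr_measure ?L F"
  have L: "finite_measure ?L"
    using finite_measure_add_measure[OF MN fin] .
  have FL: "sigma_algebra (space ?L) F" "F \<subseteq> sets ?L"
    using F by simp_all
  have "h z = enn2real (RN_deriv ?LF (restr_measure M F) z)" for z
    using add_measure_restr_measure[OF MN F] by (simp add: h_def likelihood_ratio_def)
  note RN_F = RN_deriv_restr_measure_set_integral[OF L fin(1) _ absolutely_continuous_add_measure(1)[OF MN] FL,
      folded this, simplified]
  show "integrable ?L h" and "A \<in> F \<Longrightarrow> (\<integral>z. h z * indicator A z \<partial>?L) = measure M A"
    using RN_F by simp_all
qed

lemma fst_likelihood_ratio:
  assumes MN: "sets M = sets N" and fin: "finite_measure M" "finite_measure N"
  shows "integrable (add_measure M N) (\<lambda>z. fst (likelihood_ratio M N z))"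
    and "A \<in> sets M \<Longrightarrow> (\<integral>z. fst (likelihood_ratio M N z) * indicator A z \<partial>add_measure M N) = measure M A"
  using fst_likelihood_ratio_restr_measure[OF MN fin sets.sigma_algebra_axioms subset_refl]
  by (simp_all add: restr_measure_sets MN)

lemma AE_dH_likelihood_ratio_restr_measure:
  assumes MN: "sets M = sets N" and fin: "finite_measure M" "finite_measure N"
    and F: "sigma_algebra (space M) F" "F \<subseteq> sets M"
  shows "AE z in add_measure M N.
           dH (likelihood_ratio (restr_measure M F) (restr_measure N F) z) (likelihood_ratio M N z)
           = \<bar>fst (likelihood_ratio (restr_measure M F) (restr_measure N F) z) - fst (likelihood_ratio M N z)\<bar>"
proof -
  let ?p = "likelihood_ratio (restr_measure M F) (restr_measure N F)"
  let ?q = "likelihood_ratio M N"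
  have FN: "sigma_algebra (space N) F" "F \<subseteq> sets N"
    using F MN sets_eq_imp_space_eq[OF MN] by simp_all
  have "sets (restr_measure M F) = sets (restr_measure N F)"
    using F FN by (simp add: sets_restr_measure)
  from AE_likelihood_ratio_sum_eq_1[OF this finite_measure_restr_measure[OF F fin(1)]
      finite_measure_restr_measure[OF FN fin(2)]]
  have "AE z in add_measure M N. fst (?p z) + snd (?p z) = 1"
    unfolding add_measure_restr_measure[OF MN F] by (rule AE_restr_measure[rotated 2]) (use F in simp_all)
  moreover have "AE z in add_measure M N. fst (?q z) + snd (?q z) = 1"
    using AE_likelihood_ratio_sum_eq_1[OF MN fin] .
  ultimately show ?thesis
    by eventually_elim (simp add: dH_eq_abs_diff_fst)
qed

lemma integral_abs_diff_likelihood_ratio_restr_measure_le: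
  fixes g :: "'a \<Rightarrow> real"
  assumes MN: "sets M = sets N" and fin: "finite_measure M" "finite_measure N"
    and F: "sigma_algebra (space M) F" "F \<subseteq> sets M"
    and g: "g \<in> borel_measurable (restr_measure M F)" "integrable (add_measure M N) g"
  shows "(\<integral>z. \<bar>fst (likelihood_ratio (restr_measure M F) (restr_measure N F) z) - fst (likelihood_ratio M N z)\<bar>
           \<partial>add_measure M N)
         \<le> 2 * (\<integral>z. \<bar>fst (likelihood_ratio M N z) - g z\<bar> \<partial>add_measure M N)"
proof -
  let ?L = "add_measure M N"
  let ?h = "\<lambda>z. fst (likelihood_ratio (restr_measure M F) (restr_measure N F) z)"
  let ?f = "\<lambda>z. fst (likelihood_ratio M N z)"
  note h = fst_likelihood_ratio_restr_measure[OF MN fin F]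
  note f = fst_likelihood_ratio[OF MN fin]
  have sets_MF: "sets (restr_measure M F) = F"
    using F by (simp add: sets_restr_measure)
  have "(\<integral>z. \<bar>?h z - g z\<bar> \<partial>?L) \<le> (\<integral>z. \<bar>?f z - g z\<bar> \<partial>?L)"
  proof (rule integral_abs_diff_cond_exp_le[where N="restr_measure M F"])
    fix A assume "A \<in> sets (restr_measure M F)"
    then show "(\<integral>z. ?h z * indicator A z \<partial>?L) = (\<integral>z. ?f z * indicator A z \<partial>?L)"
      using h(2) f(2) F sets_MF by auto
  qed (use h(1) g f(1) F sets_MF borel_measurable_likelihood_ratio(1) in simp_all)
  then show ?thesis
    using integral_abs_diff_triangle[OF h(1) g(2) f(1)] by (simp add: abs_minus_commute)
qed

lemma measure_likelihood_ratio_deviation_le: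
  fixes g :: "'a \<Rightarrow> real"
  assumes MN: "sets M = sets N" and fin: "finite_measure M" "finite_measure N"
    and F: "sigma_algebra (space M) F" "F \<subseteq> sets M"
    and g: "g \<in> borel_measurable (restr_measure M F)" "integrable (add_measure M N) g"
    and e: "e > 0"
  defines "E \<equiv> {z \<in> space M. e \<le> dH (likelihood_ratio (restr_measure M F) (restr_measure N F) z)
                                       (likelihood_ratio M N z)}"
  shows "E \<in> sets M"
    and "measure (add_measure M N) E \<le> 2 * (\<integral>z. \<bar>fst (likelihood_ratio M N z) - g z\<bar> \<partial>add_measure M N) / e"
proof -
  let ?L = "add_measure M N"
  let ?p = "likelihood_ratio (restr_measure M F) (restr_measure N F)"
  let ?q = "likelihood_ratio M N"
  note h = fst_likelihood_ratio_restr_measure[OF MN fin F]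
  note f = fst_likelihood_ratio[OF MN fin]
  have sub: "subalgebra ?L (restr_measure M F)"
    using F by (simp add: subalgebra_def sets_restr_measure)
  have [measurable]: "(\<lambda>z. fst (?p z)) \<in> borel_measurable ?L" "(\<lambda>z. snd (?p z)) \<in> borel_measurable ?L"
    by (rule measurable_from_subalg[OF sub borel_measurable_likelihood_ratio(1)],
        rule measurable_from_subalg[OF sub borel_measurable_likelihood_ratio(2)])
  have measurable_L: "measurable ?L borel = measurable M borel"
    by (rule measurable_cong_sets) simp_all
  have [measurable]: "(\<lambda>z. fst (?q z)) \<in> borel_measurable ?L" "(\<lambda>z. snd (?q z)) \<in> borel_measurable ?L"
    unfolding measurable_L by (rule borel_measurable_likelihood_ratio(1), rule borel_measurable_likelihood_ratio(2))
  have E_L: "E \<in> sets ?L"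
    unfolding E_def dH_def space_add_measure[symmetric, of M N] by measurable
  then show "E \<in> sets M"
    by simp
  have "measure ?L E = measure ?L {z \<in> space ?L. e \<le> \<bar>fst (?p z) - fst (?q z)\<bar>}"
  proof (rule measure_eq_AE)
    show "AE z in ?L. (z \<in> E) = (z \<in> {z \<in> space ?L. e \<le> \<bar>fst (?p z) - fst (?q z)\<bar>})"
      using AE_dH_likelihood_ratio_restr_measure[OF MN fin F] by eventually_elim (simp add: E_def)
  qed (use E_L in measurable)
  also have "\<dots> \<le> (\<integral>z. \<bar>fst (?p z) - fst (?q z)\<bar> \<partial>?L) / e"
    using h(1) f(1) e by (intro integral_Markov_inequality_measure[OF _ sets.top]) auto
  also have "\<dots> \<le> 2 * (\<integral>z. \<bar>fst (?q z) - g z\<bar> \<partial>?L) / e"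
    using integral_abs_diff_likelihood_ratio_restr_measure_le[OF MN fin F g] e by (simp add: divide_right_mono)
  finally show "measure ?L E \<le> 2 * (\<integral>z. \<bar>fst (?q z) - g z\<bar> \<partial>?L) / e" .
qed

lemma finite_sigma_sets:
  assumes fin: "finite G" and G: "G \<subseteq> Pow X"
  shows "finite (sigma_sets X G)"
proof -
  \<comment> \<open>Each set of \<open>sigma_sets X G\<close> is a union of atoms (points lying in the same generators).\<close>
  define atom where "atom x = {g\<in>G. x \<in> g}" for x
  have saturated: "A \<subseteq> X \<and> (\<forall>x\<in>X. \<forall>y\<in>A. atom x = atom y \<longrightarrow> x \<in> A)" if "A \<in> sigma_sets X G" for A
    using that
  proof induct
    case (Basic a)
    then show ?case using G by (auto simp: atom_def)
  next
    case Empty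
    then show ?case by simp
  next
    case (Compl a)
    show ?case
    proof (intro conjI ballI impI)
      fix x y assume x: "x \<in> X" and y: "y \<in> X - a" and same: "atom x = atom y"
      have "x \<notin> a"
      proof
        assume xa: "x \<in> a"
        have yX: "y \<in> X" using y by simp
        have "atom y = atom x" using same by simp
        then have "y \<in> a" using Compl(2) yX xa by blast
        then show False using y by simp
      qed
      then show "x \<in> X - a" using x by simp
    qed auto
  next
    case (Union a)
    show ?case
    proof (intro conjI ballI impI)
      show "\<Union> (range a) \<subseteq> X" using Union by auto
      fix x y assume x: "x \<in> X" and y: "y \<in> \<Union> (range a)" and same: "atom x = atom y"
      then obtain i where "y \<in> a i" by auto
      then have "x \<in> a i" using Union(2)[of i] x same by auto
      then show "x \<in> \<Union> (range a)" by auto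
    qed
  qed
  have "sigma_sets X G \<subseteq> (\<lambda>T. {x\<in>X. atom x \<in> T}) ` Pow (Pow G)"
  proof
    fix A assume A: "A \<in> sigma_sets X G"
    have "A = {x\<in>X. atom x \<in> atom ` A}"
      using saturated[OF A] by blast
    moreover have "atom ` A \<in> Pow (Pow G)"
      by (auto simp: atom_def)
    ultimately show "A \<in> (\<lambda>T. {x\<in>X. atom x \<in> T}) ` Pow (Pow G)"
      by blast
  qed
  moreover have "finite ((\<lambda>T. {x\<in>X. atom x \<in> T}) ` Pow (Pow G))"
    using fin by simp
  ultimately show ?thesis
    by (rule finite_subset)
qed

definition finite_sub_sigma :: "'a measure \<Rightarrow> 'a set set \<Rightarrow> bool" where
  "finite_sub_sigma M C \<longleftrightarrow> sigma_algebra (space M) C \<and> finite C \<and> C \<subseteq> sets M"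

lemma finite_sub_sigma_sigma_sets:
  assumes "finite G" and "G \<subseteq> sets M"
  shows "finite_sub_sigma M (sigma_sets (space M) G)"
proof -
  have "G \<subseteq> Pow (space M)"
    using assms(2) sets.space_closed by blast
  then show ?thesis
    using assms unfolding finite_sub_sigma_def
    by (simp add: sigma_algebra_sigma_sets finite_sigma_sets sets.sigma_sets_subset)
qed

lemma finite_sub_sigma_join:
  assumes "finite_sub_sigma M C" and "finite_sub_sigma M D"
  shows "\<exists>E. finite_sub_sigma M E \<and> C \<subseteq> E \<and> D \<subseteq> E"
proof (intro exI conjI)
  show "finite_sub_sigma M (sigma_sets (space M) (C \<union> D))"
    using assms by (intro finite_sub_sigma_sigma_sets) (auto simp: finite_sub_sigma_def)
  show "C \<subseteq> sigma_sets (space M) (C \<union> D)" "D \<subseteq> sigma_sets (space M) (C \<union> D)"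
    by (auto intro: sigma_sets.Basic)
qed

lemma prod_sigma_mono:
  "C \<subseteq> C' \<Longrightarrow> D \<subseteq> D' \<Longrightarrow> prod_sigma X C Y D \<subseteq> prod_sigma X C' Y D'"
  unfolding prod_sigma_def by (rule sigma_sets_mono') blast

definition finite_prod_sigmas :: "'a measure \<Rightarrow> 'b measure \<Rightarrow> ('a \<times> 'b) set set set" where
  "finite_prod_sigmas M1 M2 = {prod_sigma (space M1) C (space M2) D | C D.
      finite_sub_sigma M1 C \<and> finite_sub_sigma M2 D}"

lemma finite_prod_sigmas_join:
  assumes "S \<in> finite_prod_sigmas M1 M2" and "T \<in> finite_prod_sigmas M1 M2"
  shows "\<exists>U\<in>finite_prod_sigmas M1 M2. S \<subseteq> U \<and> T \<subseteq> U"
proof -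
  obtain C D C' D' where S: "S = prod_sigma (space M1) C (space M2) D"
    and T: "T = prod_sigma (space M1) C' (space M2) D'"
    and sub: "finite_sub_sigma M1 C" "finite_sub_sigma M2 D" "finite_sub_sigma M1 C'" "finite_sub_sigma M2 D'"
    using assms by (auto simp: finite_prod_sigmas_def)
  obtain C'' D'' where C'': "finite_sub_sigma M1 C''" "C \<subseteq> C''" "C' \<subseteq> C''"
    and D'': "finite_sub_sigma M2 D''" "D \<subseteq> D''" "D' \<subseteq> D''"
    using finite_sub_sigma_join[OF sub(1,3)] finite_sub_sigma_join[OF sub(2,4)] by blast
  show ?thesis
  proof (intro bexI conjI)
    show "prod_sigma (space M1) C'' (space M2) D'' \<in> finite_prod_sigmas M1 M2"
      using C''(1) D''(1) unfolding finite_prod_sigmas_def by blast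
    show "S \<subseteq> prod_sigma (space M1) C'' (space M2) D''" "T \<subseteq> prod_sigma (space M1) C'' (space M2) D''"
      unfolding S T using C'' D'' by (simp_all add: prod_sigma_mono)
  qed
qed

lemma finite_prod_sigmas_rectangle:
  assumes "a \<in> sets M1" and "b \<in> sets M2"
  shows "\<exists>S\<in>finite_prod_sigmas M1 M2. a \<times> b \<in> S"
proof -
  have "finite_sub_sigma M1 (sigma_sets (space M1) {a})" "finite_sub_sigma M2 (sigma_sets (space M2) {b})"
    using assms by (simp_all add: finite_sub_sigma_sigma_sets)
  moreover have "a \<times> b \<in> prod_sigma (space M1) (sigma_sets (space M1) {a}) (space M2) (sigma_sets (space M2) {b})"
    unfolding prod_sigma_def by (blast intro: sigma_sets.Basic)
  ultimately show ?thesis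
    unfolding finite_prod_sigmas_def by blast
qed

lemma sigma_algebra_finite_prod_sigmas:
  assumes "S \<in> finite_prod_sigmas M1 M2"
  shows "sigma_algebra (space M1 \<times> space M2) S"
proof -
  obtain C D where S: "S = prod_sigma (space M1) C (space M2) D"
    and C: "C \<subseteq> sets M1" and D: "D \<subseteq> sets M2"
    using assms by (auto simp: finite_prod_sigmas_def finite_sub_sigma_def)
  have "{a \<times> b |a b. a \<in> C \<and> b \<in> D} \<subseteq> Pow (space M1 \<times> space M2)"
    using C D by (auto dest: sets.sets_into_space)
  then show ?thesis
    unfolding S prod_sigma_def by (rule sigma_algebra_sigma_sets)
qed

lemma finite_prod_sigmas_subset_sets:
  assumes "S \<in> finite_prod_sigmas M1 M2"
  shows "S \<subseteq> sets (M1 \<Otimes>\<^sub>M M2)"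
proof -
  obtain C D where S: "S = prod_sigma (space M1) C (space M2) D"
    and "C \<subseteq> sets M1" and "D \<subseteq> sets M2"
    using assms by (auto simp: finite_prod_sigmas_def finite_sub_sigma_def)
  then show ?thesis
    unfolding S prod_sigma_def sets_pair_measure by (intro sigma_sets_mono') blast
qed

lemma borel_measurable_restr_measure_mono:
  assumes "sigma_algebra (space M) S" and "sigma_algebra (space N) T"
    and "space M = space N" and "S \<subseteq> T"
    and "g \<in> borel_measurable (restr_measure M S)"
  shows "g \<in> borel_measurable (restr_measure N T)"
  by (rule borel_measurable_subalgebra[OF _ _ assms(5)]) (use assms in \<open>simp_all add: sets_restr_measure\<close>)

lemma finite_prod_sigmas_sub_sigma:
  assumes "sets L = sets (M1 \<Otimes>\<^sub>M M2)" and "S \<in> finite_prod_sigmas M1 M2"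
  shows "sigma_algebra (space L) S" and "S \<subseteq> sets L"
  using sigma_algebra_finite_prod_sigmas[OF assms(2)] finite_prod_sigmas_subset_sets[OF assms(2)] assms(1)
    sets_eq_imp_space_eq[OF assms(1)]
  by (simp_all add: space_pair_measure)

definition finite_prod_approximable_set ::
    "('a \<times> 'b) measure \<Rightarrow> 'a measure \<Rightarrow> 'b measure \<Rightarrow> ('a \<times> 'b) set \<Rightarrow> bool" where
  "finite_prod_approximable_set L M1 M2 A \<longleftrightarrow>
     (\<forall>\<eta>>0. \<exists>S\<in>finite_prod_sigmas M1 M2. \<exists>R\<in>S. measure L (sym_diff A R) < \<eta>)"

lemma finite_prod_approximable_set_rectangle:
  assumes "a \<in> sets M1" and "b \<in> sets M2"
  shows "finite_prod_approximable_set L M1 M2 (a \<times> b)"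
proof -
  obtain S where "S \<in> finite_prod_sigmas M1 M2" "a \<times> b \<in> S"
    using finite_prod_sigmas_rectangle[OF assms] by blast
  then show ?thesis
    unfolding finite_prod_approximable_set_def by (intro allI impI bexI[of _ S] bexI[of _ "a \<times> b"]) auto
qed

lemma finite_prod_approximable_set_Compl:
  assumes A: "A \<subseteq> space M1 \<times> space M2" and approx: "finite_prod_approximable_set L M1 M2 A"
  shows "finite_prod_approximable_set L M1 M2 (space M1 \<times> space M2 - A)"
  unfolding finite_prod_approximable_set_def
proof (intro allI impI)
  let ?\<Omega> = "space M1 \<times> space M2"
  fix \<eta> :: real assume "\<eta> > 0"
  then obtain S R where S: "S \<in> finite_prod_sigmas M1 M2" and R: "R \<in> S"
    and small: "measure L (sym_diff A R) < \<eta>"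
    using approx unfolding finite_prod_approximable_set_def by blast
  interpret S: sigma_algebra ?\<Omega> S
    using sigma_algebra_finite_prod_sigmas[OF S] .
  have "sym_diff (?\<Omega> - A) (?\<Omega> - R) = sym_diff A R"
    using A S.sets_into_space[OF R] by blast
  then show "\<exists>S\<in>finite_prod_sigmas M1 M2. \<exists>R\<in>S. measure L (sym_diff (?\<Omega> - A) R) < \<eta>"
    using S S.compl_sets[OF R] small by metis
qed

lemma finite_prod_approximable_set_Un:
  assumes L: "finite_measure L" and AB: "A \<in> sets L" "B \<in> sets L" and sets_L: "sets L = sets (M1 \<Otimes>\<^sub>M M2)"
    and approx: "finite_prod_approximable_set L M1 M2 A" "finite_prod_approximable_set L M1 M2 B"
  shows "finite_prod_approximable_set L M1 M2 (A \<union> B)"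
  unfolding finite_prod_approximable_set_def
proof (intro allI impI)
  interpret L: finite_measure L by fact
  fix \<eta> :: real assume "\<eta> > 0"
  then have "\<eta> / 2 > 0"
    by simp
  then obtain S1 R1 S2 R2 where S: "S1 \<in> finite_prod_sigmas M1 M2" "S2 \<in> finite_prod_sigmas M1 M2"
    and R: "R1 \<in> S1" "R2 \<in> S2"
    and small: "measure L (sym_diff A R1) < \<eta> / 2" "measure L (sym_diff B R2) < \<eta> / 2"
    using approx unfolding finite_prod_approximable_set_def by blast
  obtain T where T: "T \<in> finite_prod_sigmas M1 M2" "S1 \<subseteq> T" "S2 \<subseteq> T"
    using finite_prod_sigmas_join[OF S] by blast
  interpret T: sigma_algebra "space M1 \<times> space M2" T
    using sigma_algebra_finite_prod_sigmas[OF T(1)] .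
  have RL: "R1 \<in> sets L" "R2 \<in> sets L"
    using R finite_prod_sigmas_sub_sigma(2)[OF sets_L] S by auto
  have "measure L (sym_diff (A \<union> B) (R1 \<union> R2)) \<le> measure L (sym_diff A R1 \<union> sym_diff B R2)"
    using AB RL by (intro L.finite_measure_mono) auto
  also have "\<dots> \<le> measure L (sym_diff A R1) + measure L (sym_diff B R2)"
    using AB RL by (intro measure_subadditive) (auto simp: L.emeasure_eq_measure)
  finally have "measure L (sym_diff (A \<union> B) (R1 \<union> R2)) < \<eta>"
    using small by simp
  moreover have "R1 \<union> R2 \<in> T"
    using R T by auto
  ultimately show "\<exists>S\<in>finite_prod_sigmas M1 M2. \<exists>R\<in>S. measure L (sym_diff (A \<union> B) R) < \<eta>"
    using T(1) by blast
qed

lemma finite_prod_approximable_set_UN_lessThan: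
  fixes a :: "nat \<Rightarrow> ('a \<times> 'b) set" and n :: nat
  assumes L: "finite_measure L" and a: "range a \<subseteq> sets L" and sets_L: "sets L = sets (M1 \<Otimes>\<^sub>M M2)"
    and approx: "\<And>i. finite_prod_approximable_set L M1 M2 (a i)"
  shows "finite_prod_approximable_set L M1 M2 (\<Union>i<n. a i)"
proof (induction n)
  case 0
  then show ?case
    using finite_prod_approximable_set_rectangle[of "{}" M1 "{}" M2 L] by simp
next
  case (Suc n)
  then show ?case
    using a approx by (auto simp: lessThan_Suc intro!: finite_prod_approximable_set_Un[OF L _ _ sets_L])
qed

lemma finite_prod_approximable_set_closed:
  assumes L: "finite_measure L" and A: "A \<in> sets L" and sets_L: "sets L = sets (M1 \<Otimes>\<^sub>M M2)"
    and near: "\<And>\<eta>. \<eta> > 0 \<Longrightarrow> \<exists>B\<in>sets L. finite_prod_approximable_set L M1 M2 B \<and> measure L (sym_diff A B) < \<eta>"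
  shows "finite_prod_approximable_set L M1 M2 A"
  unfolding finite_prod_approximable_set_def
proof (intro allI impI)
  interpret L: finite_measure L by fact
  fix \<eta> :: real assume "\<eta> > 0"
  then have "\<eta> / 2 > 0"
    by simp
  then obtain B where B: "B \<in> sets L" "measure L (sym_diff A B) < \<eta> / 2"
    and "finite_prod_approximable_set L M1 M2 B"
    using near by blast
  then obtain S R where S: "S \<in> finite_prod_sigmas M1 M2" and R: "R \<in> S"
    and small: "measure L (sym_diff B R) < \<eta> / 2"
    using \<open>\<eta> / 2 > 0\<close> unfolding finite_prod_approximable_set_def by blast
  have RL: "R \<in> sets L"
    using R finite_prod_sigmas_sub_sigma(2)[OF sets_L S] by auto
  have "measure L (sym_diff A R) \<le> measure L (sym_diff A B \<union> sym_diff B R)"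
    using A B RL by (intro L.finite_measure_mono) auto
  also have "\<dots> \<le> measure L (sym_diff A B) + measure L (sym_diff B R)"
    using A B RL by (intro measure_subadditive) (auto simp: L.emeasure_eq_measure)
  finally have "measure L (sym_diff A R) < \<eta>"
    using B(2) small by simp
  then show "\<exists>S\<in>finite_prod_sigmas M1 M2. \<exists>R\<in>S. measure L (sym_diff A R) < \<eta>"
    using S R by blast
qed

lemma finite_prod_approximable_set_Union:
  fixes a :: "nat \<Rightarrow> ('a \<times> 'b) set"
  assumes L: "finite_measure L" and a: "range a \<subseteq> sets L" and sets_L: "sets L = sets (M1 \<Otimes>\<^sub>M M2)"
    and approx: "\<And>i. finite_prod_approximable_set L M1 M2 (a i)"
  shows "finite_prod_approximable_set L M1 M2 (\<Union> (range a))"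
proof (rule finite_prod_approximable_set_closed[OF L _ sets_L])
  interpret L: finite_measure L by fact
  define B where "B n = (\<Union>i<n. a i)" for n
  show UL: "\<Union> (range a) \<in> sets L"
    using a by auto
  have BL: "B n \<in> sets L" for n
    using a by (auto simp: B_def)
  fix \<eta> :: real assume "\<eta> > 0"
  have "incseq B"
    by (rule incseq_SucI) (auto simp: B_def lessThan_Suc)
  moreover have "(\<Union>n. B n) = \<Union> (range a)"
    unfolding B_def by auto
  ultimately have "(\<lambda>n. measure L (B n)) \<longlonglongrightarrow> measure L (\<Union> (range a))"
    using L.finite_Lim_measure_incseq[of B] BL by auto
  then have "\<forall>\<^sub>F n in sequentially. measure L (\<Union> (range a)) - \<eta> < measure L (B n)"
    using \<open>\<eta> > 0\<close> by (intro order_tendstoD(1)) auto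
  then obtain N where "measure L (\<Union> (range a)) - \<eta> < measure L (B N)"
    unfolding eventually_sequentially by blast
  moreover have "sym_diff (\<Union> (range a)) (B N) = \<Union> (range a) - B N" and "B N \<subseteq> \<Union> (range a)"
    unfolding B_def by auto
  ultimately have "measure L (sym_diff (\<Union> (range a)) (B N)) < \<eta>"
    using L.finite_measure_Diff[OF UL BL] by simp
  then show "\<exists>B\<in>sets L. finite_prod_approximable_set L M1 M2 B \<and> measure L (sym_diff (\<Union> (range a)) B) < \<eta>"
    using BL finite_prod_approximable_set_UN_lessThan[OF L a sets_L approx] unfolding B_def by blast
qed

lemma finite_prod_approximable_set_sets:
  assumes L: "finite_measure L" and sets_L: "sets L = sets (M1 \<Otimes>\<^sub>M M2)" and A: "A \<in> sets L"
  shows "finite_prod_approximable_set L M1 M2 A"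
proof -
  have "A \<in> sigma_sets (space M1 \<times> space M2) {a \<times> b | a b. a \<in> sets M1 \<and> b \<in> sets M2}"
    using A sets_L by (simp add: sets_pair_measure)
  then show ?thesis
  proof induct
    case (Basic a)
    then show ?case
      by (auto intro: finite_prod_approximable_set_rectangle)
  next
    case Empty
    show ?case
      using finite_prod_approximable_set_rectangle[of "{}" M1 "{}" M2 L] by simp
  next
    case (Compl a)
    then have "a \<subseteq> space M1 \<times> space M2"
      using sets.sets_into_space[of a "M1 \<Otimes>\<^sub>M M2"] by (simp add: sets_pair_measure space_pair_measure)
    then show ?case
      using Compl(2) by (rule finite_prod_approximable_set_Compl)
  next
    case (Union a)
    then show ?case
      using sets_L by (intro finite_prod_approximable_set_Union[OF L _ sets_L]) (auto simp: sets_pair_measure)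
  qed
qed

definition finite_prod_approximable ::
    "('a \<times> 'b) measure \<Rightarrow> 'a measure \<Rightarrow> 'b measure \<Rightarrow> ('a \<times> 'b \<Rightarrow> real) \<Rightarrow> bool" where
  "finite_prod_approximable L M1 M2 f \<longleftrightarrow>
     (\<forall>\<eta>>0. \<exists>S\<in>finite_prod_sigmas M1 M2. \<exists>g\<in>borel_measurable (restr_measure L S).
        integrable L g \<and> (\<integral>x. \<bar>f x - g x\<bar> \<partial>L) < \<eta>)"

lemma finite_prod_approximable_indicator:
  assumes L: "finite_measure L" and sets_L: "sets L = sets (M1 \<Otimes>\<^sub>M M2)" and A: "A \<in> sets L"
  shows "finite_prod_approximable L M1 M2 (\<lambda>x. indicator A x *\<^sub>R c)"
  unfolding finite_prod_approximable_def
proof (intro allI impI)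
  interpret L: finite_measure L by fact
  fix \<eta> :: real assume "\<eta> > 0"
  then have "\<eta> / (\<bar>c\<bar> + 1) > 0"
    by simp
  then obtain S R where S: "S \<in> finite_prod_sigmas M1 M2" and R: "R \<in> S"
    and small: "measure L (sym_diff A R) < \<eta> / (\<bar>c\<bar> + 1)"
    using finite_prod_approximable_set_sets[OF L sets_L A]
    unfolding finite_prod_approximable_set_def by blast
  have R_L: "R \<in> sets L"
    using finite_prod_sigmas_sub_sigma(2)[OF sets_L S] R by auto
  have "R \<in> sets (restr_measure L S)"
    using R finite_prod_sigmas_sub_sigma(1)[OF sets_L S] by (simp add: sets_restr_measure)
  then have "(\<lambda>x. c * indicator R x) \<in> borel_measurable (restr_measure L S)"
    by (intro borel_measurable_times borel_measurable_const borel_measurable_indicator)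
  moreover have "integrable L (\<lambda>x. c * indicator R x)"
    using integrable_real_mult_indicator[OF R_L L.integrable_const[of c]] by (simp add: mult.commute)
  moreover have "(\<integral>x. \<bar>indicator A x *\<^sub>R c - c * indicator R x\<bar> \<partial>L) < \<eta>"
  proof -
    have "(\<integral>x. \<bar>indicator A x *\<^sub>R c - c * indicator R x\<bar> \<partial>L) = (\<integral>x. \<bar>c\<bar> * indicator (sym_diff A R) x \<partial>L)"
      by (rule Bochner_Integration.integral_cong[OF refl]) (auto simp: indicator_def)
    also have "\<dots> = \<bar>c\<bar> * measure L (sym_diff A R)"
      using R_L A by simp
    also have "\<dots> \<le> \<bar>c\<bar> * (\<eta> / (\<bar>c\<bar> + 1))"
      using small by (intro mult_left_mono) auto
    also have "\<dots> < \<eta>"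
      using \<open>\<eta> > 0\<close> by (simp add: field_simps)
    finally show ?thesis .
  qed
  ultimately show "\<exists>S\<in>finite_prod_sigmas M1 M2. \<exists>g\<in>borel_measurable (restr_measure L S).
      integrable L g \<and> (\<integral>x. \<bar>indicator A x *\<^sub>R c - g x\<bar> \<partial>L) < \<eta>"
    using S by blast
qed

lemma finite_prod_approximable_add:
  assumes sets_L: "sets L = sets (M1 \<Otimes>\<^sub>M M2)"
    and f: "integrable L f" "finite_prod_approximable L M1 M2 f"
    and g: "integrable L g" "finite_prod_approximable L M1 M2 g"
  shows "finite_prod_approximable L M1 M2 (\<lambda>x. f x + g x)"
  unfolding finite_prod_approximable_def
proof (intro allI impI)
  fix \<eta> :: real assume "\<eta> > 0"
  then have "\<eta> / 2 > 0"
    by simp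
  then obtain S1 f' S2 g' where S: "S1 \<in> finite_prod_sigmas M1 M2" "S2 \<in> finite_prod_sigmas M1 M2"
    and meas: "f' \<in> borel_measurable (restr_measure L S1)" "g' \<in> borel_measurable (restr_measure L S2)"
    and int: "integrable L f'" "integrable L g'"
    and small: "(\<integral>x. \<bar>f x - f' x\<bar> \<partial>L) < \<eta> / 2" "(\<integral>x. \<bar>g x - g' x\<bar> \<partial>L) < \<eta> / 2"
    using f(2) g(2) unfolding finite_prod_approximable_def by blast
  obtain T where T: "T \<in> finite_prod_sigmas M1 M2" "S1 \<subseteq> T" "S2 \<subseteq> T"
    using finite_prod_sigmas_join[OF S] by blast
  note sub_sigma = finite_prod_sigmas_sub_sigma(1)[OF sets_L]
  have "(\<lambda>x. f' x + g' x) \<in> borel_measurable (restr_measure L T)"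
    using borel_measurable_restr_measure_mono[OF sub_sigma[OF S(1)] sub_sigma[OF T(1)] refl T(2) meas(1)]
      borel_measurable_restr_measure_mono[OF sub_sigma[OF S(2)] sub_sigma[OF T(1)] refl T(3) meas(2)]
    by simp
  moreover have "(\<integral>x. \<bar>(f x + g x) - (f' x + g' x)\<bar> \<partial>L) < \<eta>"
  proof -
    have "(\<integral>x. \<bar>(f x + g x) - (f' x + g' x)\<bar> \<partial>L) \<le> (\<integral>x. \<bar>f x - f' x\<bar> + \<bar>g x - g' x\<bar> \<partial>L)"
      using f(1) g(1) int by (intro Bochner_Integration.integral_mono) auto
    also have "\<dots> = (\<integral>x. \<bar>f x - f' x\<bar> \<partial>L) + (\<integral>x. \<bar>g x - g' x\<bar> \<partial>L)"
      using f(1) g(1) int by (intro Bochner_Integration.integral_add) auto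
    finally show ?thesis
      using small by simp
  qed
  ultimately show "\<exists>S\<in>finite_prod_sigmas M1 M2. \<exists>h\<in>borel_measurable (restr_measure L S).
      integrable L h \<and> (\<integral>x. \<bar>(f x + g x) - h x\<bar> \<partial>L) < \<eta>"
    using T(1) int by blast
qed

lemma finite_prod_approximable_L1_limit:
  assumes f: "integrable L f" and s: "\<And>i. integrable L (s i)" "\<And>i. finite_prod_approximable L M1 M2 (s i)"
    and lim: "(\<lambda>i. \<integral>x. \<bar>f x - s i x\<bar> \<partial>L) \<longlonglongrightarrow> 0"
  shows "finite_prod_approximable L M1 M2 f"
  unfolding finite_prod_approximable_def
proof (intro allI impI)
  fix \<eta> :: real assume "\<eta> > 0"
  then have "\<forall>\<^sub>F i in sequentially. (\<integral>x. \<bar>f x - s i x\<bar> \<partial>L) < \<eta> / 2"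
    using lim by (intro order_tendstoD(2)) auto
  then obtain i where i: "(\<integral>x. \<bar>f x - s i x\<bar> \<partial>L) < \<eta> / 2"
    unfolding eventually_sequentially by blast
  obtain S g where "S \<in> finite_prod_sigmas M1 M2" "g \<in> borel_measurable (restr_measure L S)"
    and g: "integrable L g" and small: "(\<integral>x. \<bar>s i x - g x\<bar> \<partial>L) < \<eta> / 2"
    using s(2)[of i, unfolded finite_prod_approximable_def, rule_format, of "\<eta> / 2"] \<open>\<eta> > 0\<close> by auto
  moreover have "(\<integral>x. \<bar>f x - g x\<bar> \<partial>L) < \<eta>"
    using integral_abs_diff_triangle[OF f s(1) g, of i] i small by simp
  ultimately show "\<exists>S\<in>finite_prod_sigmas M1 M2. \<exists>g\<in>borel_measurable (restr_measure L S).
      integrable L g \<and> (\<integral>x. \<bar>f x - g x\<bar> \<partial>L) < \<eta>"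
    by blast
qed

lemma finite_prod_approximable_integrable:
  assumes L: "finite_measure L" and sets_L: "sets L = sets (M1 \<Otimes>\<^sub>M M2)" and f: "integrable L f"
  shows "finite_prod_approximable L M1 M2 f"
  using f
proof (induct rule: integrable_induct)
  case (base A c)
  show ?case
    by (rule finite_prod_approximable_indicator[OF L sets_L base(1)])
next
  case (add f g)
  show ?case
    by (rule finite_prod_approximable_add[OF sets_L add(1-4)])
next
  case (lim f s)
  have "(\<lambda>i. \<integral>x. \<bar>f x - s i x\<bar> \<partial>L) \<longlonglongrightarrow> (\<integral>x. 0 \<partial>L)"
  proof (rule integral_dominated_convergence[where w="\<lambda>x. 3 * \<bar>f x\<bar>"])
    show "AE x in L. (\<lambda>i. \<bar>f x - s i x\<bar>) \<longlonglongrightarrow> 0"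
    proof (rule AE_I2)
      fix x assume "x \<in> space L"
      then have "(\<lambda>i. \<bar>f x - s i x\<bar>) \<longlonglongrightarrow> \<bar>f x - f x\<bar>"
        by (intro tendsto_intros lim(3))
      then show "(\<lambda>i. \<bar>f x - s i x\<bar>) \<longlonglongrightarrow> 0"
        by simp
    qed
    show "AE x in L. norm \<bar>f x - s i x\<bar> \<le> 3 * \<bar>f x\<bar>" for i
      using lim(4)[of _ i] by (intro AE_I2) fastforce
  qed (use lim(1,5) in auto)
  then show ?case
    by (intro finite_prod_approximable_L1_limit[OF lim(5) lim(1) lim(2)]) simp
qed

theorem theorem4:
  fixes M1 :: "'a measure" and M2 :: "'b measure"
    and \<mu> \<nu> \<xi> :: "('a \<times> 'b) measure"
  assumes "sets \<mu> = sets (M1 \<Otimes>\<^sub>M M2)" and "sets \<nu> = sets (M1 \<Otimes>\<^sub>M M2)"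
    and "sets \<xi> = sets (M1 \<Otimes>\<^sub>M M2)"
    and "finite_measure \<mu>" and "finite_measure \<nu>" and "finite_measure \<xi>"
    and "absolutely_continuous (add_measure \<mu> \<nu>) \<xi>"
    and "\<epsilon> > 0"
  shows "\<exists>C D. sigma_algebra (space M1) C \<and> finite C \<and> C \<subseteq> sets M1 \<and>
           sigma_algebra (space M2) D \<and> finite D \<and> D \<subseteq> sets M2 \<and>
           (\<forall>F. sigma_algebra (space M1 \<times> space M2) F \<and>
                prod_sigma (space M1) C (space M2) D \<subseteq> F \<and> F \<subseteq> sets (M1 \<Otimes>\<^sub>M M2) \<longrightarrow>
              measure \<xi> {z \<in> space (M1 \<Otimes>\<^sub>M M2).
                 dH (likelihood_ratio (restr_measure \<mu> F) (restr_measure \<nu> F) z)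
                    (likelihood_ratio \<mu> \<nu> z) \<ge> \<epsilon>} < \<epsilon>)"
proof -
  let ?L = "add_measure \<mu> \<nu>"
  let ?f = "\<lambda>z. fst (likelihood_ratio \<mu> \<nu> z)"
  have \<mu>\<nu>: "sets \<mu> = sets \<nu>" and sets_L: "sets ?L = sets (M1 \<Otimes>\<^sub>M M2)" and sets_\<xi>: "sets \<xi> = sets ?L"
    using assms(1-3) by simp_all
  have space_\<mu>: "space \<mu> = space M1 \<times> space M2"
    using sets_eq_imp_space_eq[OF assms(1)] by (simp add: space_pair_measure)
  have L: "finite_measure ?L"
    using finite_measure_add_measure[OF \<mu>\<nu> assms(4,5)] .
  obtain \<delta> where "\<delta> > 0" and \<xi>_small: "\<And>A. A \<in> sets ?L \<Longrightarrow> measure ?L A < \<delta> \<Longrightarrow> measure \<xi> A < \<epsilon>"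
    using absolutely_continuous_epsilon_delta[OF L assms(6) sets_\<xi> assms(7,8)] by blast
  have f: "integrable ?L ?f"
    using fst_likelihood_ratio(1)[OF \<mu>\<nu> assms(4,5)] .
  have "\<delta> * \<epsilon> / 2 > 0"
    using \<open>\<delta> > 0\<close> assms(8) by simp
  then obtain S g where S: "S \<in> finite_prod_sigmas M1 M2" and g: "g \<in> borel_measurable (restr_measure ?L S)"
    "integrable ?L g" and approx: "(\<integral>z. \<bar>?f z - g z\<bar> \<partial>?L) < \<delta> * \<epsilon> / 2"
    using finite_prod_approximable_integrable[OF L sets_L f] unfolding finite_prod_approximable_def by blast
  obtain C D where S_CD: "S = prod_sigma (space M1) C (space M2) D"
    and C: "finite_sub_sigma M1 C" and D: "finite_sub_sigma M2 D"
    using S by (auto simp: finite_prod_sigmas_def)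
  have "measure \<xi> {z \<in> space \<mu>. \<epsilon> \<le> dH (likelihood_ratio (restr_measure \<mu> F) (restr_measure \<nu> F) z)
      (likelihood_ratio \<mu> \<nu> z)} < \<epsilon>"
    if F: "sigma_algebra (space \<mu>) F" "S \<subseteq> F" "F \<subseteq> sets \<mu>" for F
  proof -
    have "g \<in> borel_measurable (restr_measure \<mu> F)"
      using borel_measurable_restr_measure_mono[OF finite_prod_sigmas_sub_sigma(1)[OF sets_L S] F(1) _ F(2) g(1)]
      by simp
    note deviation = measure_likelihood_ratio_deviation_le[OF \<mu>\<nu> assms(4,5) F(1,3) this g(2) assms(8)]
    have "2 * (\<integral>z. \<bar>?f z - g z\<bar> \<partial>?L) / \<epsilon> < \<delta>"
      using approx assms(8) by (simp add: pos_divide_less_eq mult.commute)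
    then show ?thesis
      using \<xi>_small deviation by simp
  qed
  then show ?thesis
    using C D S_CD space_\<mu> assms(1)
    by (intro exI[of _ C] exI[of _ D]) (auto simp: finite_sub_sigma_def space_pair_measure)
qed

end
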